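(* Let $A$ be the $N\times N$ tridiagonal matrix described below, block partitioned as $A = \begin{bmatrix} A_{LL} & A_{LI} \\ A_{IL} & A_{II}\end{bmatrix}$, and let $M = \begin{bmatrix} A_{LL} & A_{LI} \\ A_{IL} & M_{II}\end{bmatrix}$, where $M_{II}$ is the upper triangular part (including the diagonal) of $A_{II}$. Assume that there is a constant, $\alpha$, such that the discretization mesh satisfies $\alpha/N \leq h_i$ for $N_L+1 \leq i \leq N$. Then, any eigenvalue, $\lambda$, of $M^{-1}A$ satisfies \[ 1-\frac{8\varepsilon N}{\underline{C}\alpha} \leq \lambda \leq 1, \] where $\underline{C} > 0$ is the lower bound on $c(x)$.
   Context: Consider $-\varepsilon u'' - c(x)u' + r(x)u = f$ on $(0,1)$, $u(0)=u(1)=0$, with $\varepsilon\in(0,1]$, $0<\underline{C}\le c(x)\le\overline{C}$ and $r(x)\ge 0$ on $[0,1]$. On a mesh $0=x_0<x_1<\dots<x_N=1$ with $h_i = x_i - x_{i-1}$, $\bar h_i = (h_i+h_{i+1})/2$, $c_i=c(x_i)$, $r_i=r(x_i)$, $A$ is the tridiagonal upwind finite-difference matrix whose row $i$ has stencil $\left[ -\frac{\varepsilon}{h_i\bar h_i} , \frac{\varepsilon}{\bar h_i}\left(\frac{1}{h_i} + \frac{1}{h_{i+1}}\right) + \frac{c_i}{h_{i+1}} + r_i , -\frac{\varepsilon}{h_{i+1}\bar h_i} -\frac{c_i}{h_{i+1}} \right]$. The unknowns are split into a layer set $L$ (first $N_L$ indices, fine meshwidths near the layer, including the transition point) and an interior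 set $I$ (remaining $N_I$ indices), with $N=N_L+N_I$. *)

theory Defs
  imports Complex_Main "Jordan_Normal_Form.Char_Poly"
begin

definition mesh_h :: "(nat \<Rightarrow> real) \<Rightarrow> nat \<Rightarrow> real" where
  "mesh_h x i = x i - x (i - 1)"

definition mesh_hbar :: "(nat \<Rightarrow> real) \<Rightarrow> nat \<Rightarrow> real" where
  "mesh_hbar x i = (mesh_h x i + mesh_h x (Suc i)) / 2"

text \<open>The unknowns are the
  interior nodes x_1, ..., x_(N-1); unknown i is stored at (0-based) matrix index i - 1.
  Row i has stencil [ -eps/(h_i hbar_i),
    eps/hbar_i (1/h_i + 1/h_(i+1)) + c_i/h_(i+1) + r_i,
    -eps/(h_(i+1) hbar_i) - c_i/h_(i+1) ].\<close>
definition upwind_matrix ::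
  "real \<Rightarrow> (real \<Rightarrow> real) \<Rightarrow> (real \<Rightarrow> real) \<Rightarrow> (nat \<Rightarrow> real) \<Rightarrow> nat \<Rightarrow> real mat" where
  "upwind_matrix eps c r x N = mat (N - 1) (N - 1) (\<lambda>(j, k).
     let i = Suc j in
     if k = j then eps / mesh_hbar x i * (1 / mesh_h x i + 1 / mesh_h x (Suc i))
                   + c (x i) / mesh_h x (Suc i) + r (x i)
     else if Suc k = j then - eps / (mesh_h x i * mesh_hbar x i)
     else if k = Suc j then - eps / (mesh_h x (Suc i) * mesh_hbar x i) - c (x i) / mesh_h x (Suc i)
     else 0)"

text \<open>Block preconditioner M = [A_LL A_LI; A_IL M_II] where the layer set L consists of the
  first NL indices (0-based indices < NL) and M_II is the upper triangular part (including the
  diagonal) of A_II: i.e. the strictly lower triangular entries of the II block are dropped.\<close>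
definition block_precond :: "real mat \<Rightarrow> nat \<Rightarrow> real mat" where
  "block_precond A NL = mat (dim_row A) (dim_col A) (\<lambda>(j, k).
     if NL \<le> k \<and> k < j then 0 else A $$ (j, k))"

end

theory Submission
  imports Defs
begin

text \<open>
  The preconditioner M differs from A only by the sub-diagonal entries a j (j > NL) of the
  interior block. If A v = \<lambda> M v with \<mu> = 1 - \<lambda> \<noteq> 0, the layer rows give (M v) j = 0, so
  forward elimination ties the last layer unknown to the first interior one through a pivot
  p \<ge> b NL, while the interior rows read \<mu> (d j v j - b j v (j+1)) = a j v (j-1).
  With \<nu>^2 = \<mu> and Y k = \<nu>^k v (NL + k) this becomes a tridiagonal eigenproblem for \<nu> with
  positive off-diagonals; after a diagonal symmetrisation its Rayleigh quotient shows that \<nu> is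
  real and \<nu>^2 \<le> 4 q as soon as a k b (k-1) \<le> q D k D (k-1). On the mesh, a j \<le> q d j with
  q = 2 eps N / (Clow alpha), because h j \<ge> alpha / N and d j \<ge> c j / h (j+1). Hence
  1 - 4 q \<le> \<lambda> \<le> 1. The same elimination shows that the weakly diagonally dominant M is
  invertible.
\<close>

section \<open>Tridiagonal matrices\<close>

definition tridiag_mat :: "nat \<Rightarrow> (nat \<Rightarrow> real) \<Rightarrow> (nat \<Rightarrow> real) \<Rightarrow> (nat \<Rightarrow> real) \<Rightarrow> real mat" where
  "tridiag_mat n d a b = mat n n (\<lambda>(j, k).
     if k = j then d j else if Suc k = j then - a j else if k = Suc j then - b j else 0)"

definition zero_extend :: "'a::zero vec \<Rightarrow> nat \<Rightarrow> 'a" where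
  "zero_extend v k = (if k < dim_vec v then v $ k else 0)"

definition tridiag_row ::
  "(nat \<Rightarrow> real) \<Rightarrow> (nat \<Rightarrow> real) \<Rightarrow> (nat \<Rightarrow> real) \<Rightarrow> (nat \<Rightarrow> 'a::real_algebra_1) \<Rightarrow> nat \<Rightarrow> 'a" where
  "tridiag_row d a b u j =
     of_real (d j) * u j - (if j = 0 then 0 else of_real (a j) * u (j - 1)) - of_real (b j) * u (Suc j)"

lemma tridiag_mat_dim [simp]:
  "dim_row (tridiag_mat n d a b) = n" "dim_col (tridiag_mat n d a b) = n"
  by (simp_all add: tridiag_mat_def)

lemma tridiag_mat_carrier [simp]: "tridiag_mat n d a b \<in> carrier_mat n n"
  by (simp add: carrier_matI)

lemma sum_lessThan_tridiag:
  fixes x y z :: "'a::comm_monoid_add"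
  shows "(\<Sum>k<n. if k = j then x else if Suc k = j then y else if k = Suc j then z else 0)
    = (if j < n then x else 0) + (if 0 < j \<and> j - 1 < n then y else 0) + (if Suc j < n then z else 0)"
proof (induction n)
  case (Suc n)
  show ?case unfolding sum.lessThan_Suc Suc
    by (cases "n = j"; cases "Suc n = j"; cases "n = Suc j"; auto simp: ac_simps)
qed simp

lemma tridiag_mult_vec_nth:
  fixes v :: "'a::real_field vec"
  assumes v: "v \<in> carrier_vec n" and j: "j < n"
  shows "(map_mat of_real (tridiag_mat n d a b) *\<^sub>v v) $ j = tridiag_row d a b (zero_extend v) j"
proof -
  let ?u = "zero_extend v"
  have "(map_mat of_real (tridiag_mat n d a b) *\<^sub>v v) $ j
      = (\<Sum>k<n. of_real (tridiag_mat n d a b $$ (j, k)) * v $ k)"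
    using v j by (simp add: mult_mat_vec_def scalar_prod_def lessThan_atLeast0)
  also have "\<dots> = (\<Sum>k<n. if k = j then of_real (d j) * ?u j
      else if Suc k = j then - of_real (a j) * ?u (j - 1)
      else if k = Suc j then - of_real (b j) * ?u (Suc j) else 0)"
    using v j by (intro sum.cong) (auto simp: tridiag_mat_def zero_extend_def)
  also have "\<dots> = tridiag_row d a b ?u j"
    unfolding sum_lessThan_tridiag using v j by (auto simp: tridiag_row_def zero_extend_def)
  finally show ?thesis .
qed

definition dominant_tridiag :: "nat \<Rightarrow> (nat \<Rightarrow> real) \<Rightarrow> (nat \<Rightarrow> real) \<Rightarrow> (nat \<Rightarrow> real) \<Rightarrow> bool" where
  "dominant_tridiag n d a b \<longleftrightarrow> (\<forall>j<n. 0 \<le> a j \<and> 0 < b j \<and> a j + b j \<le> d j)"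

text \<open>The pivots of Gaussian elimination without row exchanges.\<close>
fun elim_pivot :: "(nat \<Rightarrow> real) \<Rightarrow> (nat \<Rightarrow> real) \<Rightarrow> (nat \<Rightarrow> real) \<Rightarrow> nat \<Rightarrow> real" where
  "elim_pivot d a b 0 = d 0"
| "elim_pivot d a b (Suc j) = d (Suc j) - a (Suc j) * b j / elim_pivot d a b j"

lemma elim_pivot_ge:
  assumes "dominant_tridiag n d a b" and "j < n"
  shows "b j \<le> elim_pivot d a b j"
  using \<open>j < n\<close>
proof (induction j)
  case 0
  then show ?case using assms(1) by (force simp: dominant_tridiag_def)
next
  case (Suc j)
  then have "b j \<le> elim_pivot d a b j" and "0 < b j" and "0 \<le> a (Suc j)"
    and "a (Suc j) + b (Suc j) \<le> d (Suc j)"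
    using assms(1) by (auto simp: dominant_tridiag_def)
  moreover from this have "b j / elim_pivot d a b j \<le> 1" by simp
  ultimately have "a (Suc j) * b j / elim_pivot d a b j \<le> a (Suc j)"
    by (metis mult_left_le times_divide_eq_right)
  with \<open>a (Suc j) + b (Suc j) \<le> d (Suc j)\<close> show ?case by simp
qed

lemma elim_pivot_pos:
  assumes "dominant_tridiag n d a b" and "j < n"
  shows "0 < elim_pivot d a b j"
  using elim_pivot_ge[OF assms] assms by (force simp: dominant_tridiag_def)

lemma elim_pivot_eq:
  fixes u :: "nat \<Rightarrow> 'a::real_field"
  assumes dom: "dominant_tridiag n d a b" and "K < n"
    and rows: "\<forall>j\<le>K. tridiag_row d a b u j = 0"
    and "j \<le> K"
  shows "of_real (elim_pivot d a b j) * u j = of_real (b j) * u (Suc j)"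
  using \<open>j \<le> K\<close>
proof (induction j)
  case 0
  then show ?case using rows[rule_format, of 0] by (simp add: tridiag_row_def)
next
  case (Suc j)
  have "0 < elim_pivot d a b j" using elim_pivot_pos[OF dom] Suc.prems \<open>K < n\<close> by simp
  with Suc have "u j = of_real (b j / elim_pivot d a b j) * u (Suc j)"
    by (simp add: field_simps)
  with rows Suc.prems show ?case by (simp add: tridiag_row_def algebra_simps)
qed

lemma tridiag_kernel_trivial:
  fixes v :: "'a::real_field vec"
  assumes dom: "dominant_tridiag n d a b" and v: "v \<in> carrier_vec n"
    and Tv: "map_mat of_real (tridiag_mat n d a b) *\<^sub>v v = 0\<^sub>v n"
  shows "v = 0\<^sub>v n"
proof -
  let ?u = "zero_extend v"
  have rows: "tridiag_row d a b ?u j = 0" if "j < n" for j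
    using tridiag_mult_vec_nth[OF v that, of d a b] Tv that by simp
  have u0: "?u j = 0" if "j \<le> n" for j
    using that
  proof (induction rule: inc_induct)
    case base
    show ?case using v by (simp add: zero_extend_def)
  next
    case (step j)
    then have "of_real (elim_pivot d a b j) * ?u j = 0"
      using elim_pivot_eq[OF dom step.hyps(2), of ?u j] rows step by simp
    then show ?case using elim_pivot_pos[OF dom step.hyps(2)] by simp
  qed
  have "v $ j = 0" if "j < n" for j
    using u0[of j] that v by (simp add: zero_extend_def)
  then show ?thesis using v by (intro eq_vecI) auto
qed

lemma tridiag_invertible:
  assumes "dominant_tridiag n d a b"
  shows "invertible_mat (tridiag_mat n d a b)"
proof -
  let ?T = "tridiag_mat n d a b"
  have "det (map_mat complex_of_real ?T) \<noteq> 0"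
    using tridiag_kernel_trivial[OF assms] det_0_iff_vec_prod_zero[of "map_mat complex_of_real ?T" n]
    by auto
  then have "det ?T \<noteq> 0" by (simp add: of_real_hom.hom_det)
  from det_non_zero_imp_unit[OF tridiag_mat_carrier this, unfolded Units_def, of "()"]
  obtain B where "B \<in> carrier_mat n n" "B * ?T = 1\<^sub>m n" "?T * B = 1\<^sub>m n"
    by (auto simp: ring_mat_def)
  then show ?thesis
    unfolding invertible_mat_def inverts_mat_def square_mat.simps by auto
qed

section \<open>Eigenvalues of symmetrizable tridiagonal pencils\<close>

lemma mult_le_sqrt_am_gm:
  fixes e U V P x y :: real
  assumes "e\<^sup>2 \<le> P * U * V" "0 \<le> U" "0 \<le> V" "0 \<le> P" "0 \<le> x" "0 \<le> y"
  shows "\<bar>e\<bar> * x * y \<le> sqrt P / 2 * (U * x\<^sup>2 + V * y\<^sup>2)"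
proof -
  have "\<bar>e\<bar> \<le> sqrt P * sqrt U * sqrt V"
    using assms real_sqrt_le_mono[OF assms(1)] by (simp add: real_sqrt_mult)
  then have "\<bar>e\<bar> * (x * y) \<le> (sqrt P * sqrt U * sqrt V) * (x * y)"
    using assms by (intro mult_right_mono) auto
  then have "\<bar>e\<bar> * x * y \<le> (sqrt P * sqrt U * sqrt V) * (x * y)"
    by (simp add: mult.assoc)
  also have "\<dots> = sqrt P / 2 * (2 * (sqrt U * x) * (sqrt V * y))"
    by simp
  also have "\<dots> \<le> sqrt P / 2 * (U * x\<^sup>2 + V * y\<^sup>2)"
  proof (rule mult_left_mono)
    have "0 \<le> (sqrt U * x - sqrt V * y)\<^sup>2" by simp
    then show "2 * (sqrt U * x) * (sqrt V * y) \<le> U * x\<^sup>2 + V * y\<^sup>2"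
      using assms by (simp add: power2_eq_square algebra_simps)
  qed (use assms in simp)
  finally show ?thesis .
qed

text \<open>Testing the equation against the conjugate of Y: the off-diagonal part of the Rayleigh
  quotient is a number plus its conjugate, which forces \<nu> to be real.\<close>
lemma symmetric_tridiag_rayleigh_quotient:
  fixes \<nu> :: complex and Y :: "nat \<Rightarrow> complex" and D e :: "nat \<Rightarrow> real"
  assumes e0: "e 0 = 0" and Ym: "Y m = 0"
    and eq: "\<forall>k<m. \<nu> * D k * Y k = e k * Y (k - 1) + e (Suc k) * Y (Suc k)"
  shows "\<nu> * (\<Sum>k<m. D k * (cmod (Y k))\<^sup>2) = 2 * Re (\<Sum>k<m. e k * (cnj (Y k) * Y (k - 1)))"
proof -
  define T where "T = (\<Sum>k<m. e k * (cnj (Y k) * Y (k - 1)))"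
  define F where "F k = e k * (cnj (Y (k - 1)) * Y k)" for k
  have "\<nu> * (\<Sum>k<m. D k * (cmod (Y k))\<^sup>2) = (\<Sum>k<m. cnj (Y k) * (\<nu> * D k * Y k))"
    unfolding of_real_sum sum_distrib_left
    by (rule sum.cong) (auto simp: complex_norm_square[symmetric] mult_ac)
  also have "\<dots> = (\<Sum>k<m. cnj (Y k) * (e k * Y (k - 1) + e (Suc k) * Y (Suc k)))"
    using eq by (intro sum.cong) auto
  also have "\<dots> = T + (\<Sum>k<m. F (Suc k))"
    unfolding T_def F_def sum.distrib[symmetric] by (rule sum.cong) (auto simp: algebra_simps)
  also have "(\<Sum>k<m. F (Suc k)) = (\<Sum>k<m. F k)"
    using sum.lessThan_Suc_shift[of F m] e0 Ym by (simp add: F_def)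
  also have "(\<Sum>k<m. F k) = cnj T"
    unfolding T_def F_def cnj_sum by (simp add: mult_ac)
  finally have "\<nu> * (\<Sum>k<m. D k * (cmod (Y k))\<^sup>2) = T + cnj T" .
  then show ?thesis by (simp only: complex_add_cnj T_def)
qed

lemma symmetric_tridiag_offdiag_bound:
  fixes Y :: "nat \<Rightarrow> complex" and D e :: "nat \<Rightarrow> real"
  assumes D_nonneg: "\<forall>k<m. 0 \<le> D k" and e0: "e 0 = 0" and "0 \<le> P"
    and e_bound: "\<forall>k. 0 < k \<and> k < m \<longrightarrow> (e k)\<^sup>2 \<le> P * D k * D (k - 1)"
  shows "cmod (\<Sum>k<m. e k * (cnj (Y k) * Y (k - 1))) \<le> sqrt P * (\<Sum>k<m. D k * (cmod (Y k))\<^sup>2)"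
proof -
  define R where "R k = D k * (cmod (Y k))\<^sup>2" for k
  define R' where "R' k = (if k = 0 then 0 else R (k - 1))" for k
  have "cmod (\<Sum>k<m. e k * (cnj (Y k) * Y (k - 1))) \<le> (\<Sum>k<m. \<bar>e k\<bar> * cmod (Y k) * cmod (Y (k - 1)))"
    by (rule order.trans[OF norm_sum]) (simp add: norm_mult mult.assoc)
  also have "\<dots> \<le> (\<Sum>k<m. sqrt P / 2 * (R k + R' k))"
  proof (rule sum_mono)
    fix k assume "k \<in> {..<m}"
    then show "\<bar>e k\<bar> * cmod (Y k) * cmod (Y (k - 1)) \<le> sqrt P / 2 * (R k + R' k)"
      using mult_le_sqrt_am_gm[of "e k" P "D k" "D (k - 1)"] e_bound D_nonneg e0 \<open>0 \<le> P\<close>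
      by (cases "k = 0") (auto simp: R_def R'_def)
  qed
  also have "\<dots> = sqrt P / 2 * ((\<Sum>k<m. R k) + (\<Sum>k<m. R' k))"
    unfolding sum_distrib_left[symmetric] sum.distrib[symmetric] by simp
  also have "(\<Sum>k<m. R' k) \<le> (\<Sum>k<m. R k)"
  proof (cases m)
    case (Suc m')
    then have "(\<Sum>k<m. R' k) = (\<Sum>k<m'. R k)"
      unfolding Suc sum.lessThan_Suc_shift by (simp add: R'_def)
    also have "\<dots> \<le> (\<Sum>k<m. R k)"
      using Suc D_nonneg by (simp add: R_def)
    finally show ?thesis .
  qed (simp add: R'_def)
  then have "sqrt P / 2 * ((\<Sum>k<m. R k) + (\<Sum>k<m. R' k)) \<le> sqrt P / 2 * ((\<Sum>k<m. R k) + (\<Sum>k<m. R k))"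
    using \<open>0 \<le> P\<close> by (intro mult_left_mono) auto
  finally show ?thesis by (simp add: R_def)
qed

lemma symmetric_tridiag_eigenvalue_bound:
  fixes \<nu> :: complex and Y :: "nat \<Rightarrow> complex" and D e :: "nat \<Rightarrow> real"
  assumes D_pos: "\<forall>k<m. 0 < D k" and e0: "e 0 = 0" and Ym: "Y m = 0" and "0 \<le> P"
    and eq: "\<forall>k<m. \<nu> * D k * Y k = e k * Y (k - 1) + e (Suc k) * Y (Suc k)"
    and e_bound: "\<forall>k. 0 < k \<and> k < m \<longrightarrow> (e k)\<^sup>2 \<le> P * D k * D (k - 1)"
    and nonzero: "\<exists>k<m. Y k \<noteq> 0"
  shows "\<nu> \<in> \<real> \<and> (Re \<nu>)\<^sup>2 \<le> 4 * P"
proof -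
  define Q where "Q = (\<Sum>k<m. D k * (cmod (Y k))\<^sup>2)"
  define T where "T = (\<Sum>k<m. e k * (cnj (Y k) * Y (k - 1)))"
  have "0 < Q"
  proof -
    obtain k where k: "k < m" "Y k \<noteq> 0" using nonzero by blast
    then have "0 < D k * (cmod (Y k))\<^sup>2" using D_pos by simp
    also have "\<dots> \<le> Q"
      unfolding Q_def using k D_pos by (intro member_le_sum) (auto intro: less_imp_le)
    finally show ?thesis .
  qed
  have form: "\<nu> * Q = 2 * Re T"
    using symmetric_tridiag_rayleigh_quotient[OF e0 Ym eq] by (simp add: Q_def T_def)
  then have \<nu>: "\<nu> = of_real (2 * Re T / Q)"
    using \<open>0 < Q\<close> by (simp add: field_simps)
  have "cmod T \<le> sqrt P * Q"
    unfolding Q_def T_def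
    by (rule symmetric_tridiag_offdiag_bound[OF _ e0 \<open>0 \<le> P\<close> e_bound]) (use D_pos in auto)
  have "\<bar>Re \<nu>\<bar> * Q = 2 * \<bar>Re T\<bar>"
    using \<nu> \<open>0 < Q\<close> by (simp add: abs_mult)
  also have "\<dots> \<le> 2 * sqrt P * Q"
    using abs_Re_le_cmod[of T] \<open>cmod T \<le> sqrt P * Q\<close> by simp
  finally have "\<bar>Re \<nu>\<bar> \<le> 2 * sqrt P" using \<open>0 < Q\<close> by simp
  then have "(Re \<nu>)\<^sup>2 \<le> (2 * sqrt P)\<^sup>2"
    by (metis abs_ge_zero power2_abs power_mono)
  with \<nu> \<open>0 \<le> P\<close> show ?thesis by (simp add: power_mult_distrib)
qed

fun symmetrizer :: "(nat \<Rightarrow> real) \<Rightarrow> (nat \<Rightarrow> real) \<Rightarrow> nat \<Rightarrow> real" where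
  "symmetrizer a b 0 = 1"
| "symmetrizer a b (Suc k) = symmetrizer a b k * b k / a (Suc k)"

text \<open>With positive off-diagonals, scaling row k by the product
  b 0 \<cdots> b (k-1) / (a 1 \<cdots> a k) makes the pencil symmetric.\<close>
lemma tridiag_eigenvalue_bound:
  fixes \<nu> :: complex and Y :: "nat \<Rightarrow> complex" and D a b :: "nat \<Rightarrow> real"
  assumes D_pos: "\<forall>k<m. 0 < D k" and a0: "a 0 = 0"
    and a_pos: "\<forall>k. 0 < k \<and> k < m \<longrightarrow> 0 < a k" and b_pos: "\<forall>k. Suc k < m \<longrightarrow> 0 < b k"
    and Ym: "Y m = 0" and "0 \<le> P"
    and eq: "\<forall>k<m. \<nu> * D k * Y k = a k * Y (k - 1) + b k * Y (Suc k)"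
    and ab_bound: "\<forall>k. 0 < k \<and> k < m \<longrightarrow> a k * b (k - 1) \<le> P * D k * D (k - 1)"
    and nonzero: "\<exists>k<m. Y k \<noteq> 0"
  shows "\<nu> \<in> \<real> \<and> (Re \<nu>)\<^sup>2 \<le> 4 * P"
proof -
  define w where "w = symmetrizer a b"
  have w_pos: "0 < w k" if "k < m" for k
    using that by (induction k) (use a_pos b_pos in \<open>auto simp: w_def\<close>)
  have w_Suc: "w (Suc k) * a (Suc k) = w k * b k" if "Suc k < m" for k
    using a_pos[rule_format, of "Suc k"] that by (simp add: w_def)
  show ?thesis
  proof (rule symmetric_tridiag_eigenvalue_bound[where D = "\<lambda>k. w k * D k" and e = "\<lambda>k. w k * a k"])
    show "\<forall>k<m. 0 < w k * D k" using w_pos D_pos by simp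
    show "\<forall>k<m. \<nu> * (w k * D k) * Y k = (w k * a k) * Y (k - 1) + (w (Suc k) * a (Suc k)) * Y (Suc k)"
    proof (intro allI impI)
      fix k assume "k < m"
      have "\<nu> * (w k * D k) * Y k = w k * (\<nu> * D k * Y k)"
        by (simp add: mult_ac)
      also have "\<dots> = (w k * a k) * Y (k - 1) + (w k * b k) * Y (Suc k)"
        using eq \<open>k < m\<close> by (simp add: algebra_simps)
      also have "(w k * b k) * Y (Suc k) = (w (Suc k) * a (Suc k)) * Y (Suc k)"
        using w_Suc Ym \<open>k < m\<close> by (cases "Suc k = m") auto
      finally show "\<nu> * (w k * D k) * Y k = (w k * a k) * Y (k - 1) + (w (Suc k) * a (Suc k)) * Y (Suc k)" .
    qed
    show "\<forall>k. 0 < k \<and> k < m \<longrightarrow> (w k * a k)\<^sup>2 \<le> P * (w k * D k) * (w (k - 1) * D (k - 1))"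
    proof (intro allI impI)
      fix k assume k: "0 < k \<and> k < m"
      then have "0 < w k * w (k - 1)" using w_pos by (intro mult_pos_pos) auto
      from k have "(w k * a k)\<^sup>2 = (w k * w (k - 1)) * (a k * b (k - 1))"
        using w_Suc[of "k - 1"] by (simp add: power2_eq_square mult_ac)
      also have "\<dots> \<le> (w k * w (k - 1)) * (P * D k * D (k - 1))"
        using k ab_bound \<open>0 < w k * w (k - 1)\<close> by (intro mult_left_mono) simp_all
      finally show "(w k * a k)\<^sup>2 \<le> P * (w k * D k) * (w (k - 1) * D (k - 1))"
        by (simp add: mult_ac)
    qed
  qed (use a0 Ym \<open>0 \<le> P\<close> nonzero in simp_all)
qed

section \<open>The block preconditioner\<close>

lemma block_precond_tridiag:
  "block_precond (tridiag_mat n d a b) NL = tridiag_mat n d (\<lambda>j. if NL < j then 0 else a j) b"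
proof (rule eq_matI)
  fix j k assume "j < dim_row (tridiag_mat n d (\<lambda>j. if NL < j then 0 else a j) b)"
    and "k < dim_col (tridiag_mat n d (\<lambda>j. if NL < j then 0 else a j) b)"
  then show "block_precond (tridiag_mat n d a b) NL $$ (j, k) = tridiag_mat n d (\<lambda>j. if NL < j then 0 else a j) b $$ (j, k)"
    unfolding block_precond_def by (simp add: tridiag_mat_def)
qed (simp_all add: block_precond_def)

lemma dominant_tridiag_drop_subdiag:
  assumes "dominant_tridiag n d a b"
  shows "dominant_tridiag n d (\<lambda>j. if NL < j then 0 else a j) b"
  using assms by (auto simp: dominant_tridiag_def add_increasing)

lemma eigenvector_of_inverse_mult:
  fixes A M Mi :: "real mat"
  assumes A: "A \<in> carrier_mat n n" and M: "M \<in> carrier_mat n n"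
    and inv: "inverts_mat M Mi" "inverts_mat Mi M"
    and ev: "eigenvalue (map_mat complex_of_real (Mi * A)) lam"
  obtains v where "v \<in> carrier_vec n" "v \<noteq> 0\<^sub>v n"
    "map_mat of_real A *\<^sub>v v = lam \<cdot>\<^sub>v (map_mat of_real M *\<^sub>v v)"
proof -
  have MMi: "M * Mi = 1\<^sub>m n" and MiM: "Mi * M = 1\<^sub>m (dim_row Mi)"
    using inv M by (auto simp: inverts_mat_def)
  then have Mi: "Mi \<in> carrier_mat n n"
    using M by (metis carrier_matD carrier_matI index_mult_mat(2,3) index_one_mat(2,3))
  define Ac Mc Mic where "Ac = map_mat complex_of_real A" and "Mc = map_mat complex_of_real M"
    and "Mic = map_mat complex_of_real Mi"
  have car: "Ac \<in> carrier_mat n n" "Mc \<in> carrier_mat n n" "Mic \<in> carrier_mat n n"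
    using A M Mi by (simp_all add: Ac_def Mc_def Mic_def)
  have "map_mat complex_of_real (Mi * A) = Mic * Ac"
    unfolding Ac_def Mic_def by (rule of_real_hom.mat_hom_mult[OF Mi A])
  with ev obtain v where v: "v \<in> carrier_vec n" "v \<noteq> 0\<^sub>v n" and "Mic * Ac *\<^sub>v v = lam \<cdot>\<^sub>v v"
    using car unfolding eigenvalue_def eigenvector_def by auto
  have "Mc * Mic = 1\<^sub>m n"
    unfolding Mc_def Mic_def by (metis of_real_hom.mat_hom_mult[OF M Mi] MMi of_real_hom.mat_hom_one)
  have "Ac *\<^sub>v v = (Mc * Mic) *\<^sub>v (Ac *\<^sub>v v)"
    using \<open>Mc * Mic = 1\<^sub>m n\<close> car v by simp
  also have "\<dots> = Mc *\<^sub>v (Mic * Ac *\<^sub>v v)"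
    using car v by (simp add: assoc_mult_mat_vec)
  also have "Mic * Ac *\<^sub>v v = lam \<cdot>\<^sub>v v" by fact
  also have "Mc *\<^sub>v (lam \<cdot>\<^sub>v v) = lam \<cdot>\<^sub>v (Mc *\<^sub>v v)"
    using car v by (simp add: mult_mat_vec)
  finally show ?thesis
    using that v by (simp add: Ac_def Mc_def)
qed

lemma rescaled_interior_equation:
  fixes \<nu> :: complex and u :: "nat \<Rightarrow> complex"
  assumes pivot: "p * u NL = b NL * u (Suc NL)"
    and interior: "\<forall>j. NL < j \<and> j < n \<longrightarrow> \<nu>\<^sup>2 * (d j * u j - b j * u (Suc j)) = a j * u (j - 1)"
    and "NL + k < n"
  shows "\<nu> * of_real (if k = 0 then p else d (NL + k)) * (\<nu> ^ k * u (NL + k))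
    = of_real (if k = 0 then 0 else a (NL + k)) * (\<nu> ^ (k - 1) * u (NL + (k - 1)))
      + b (NL + k) * (\<nu> ^ Suc k * u (NL + Suc k))"
proof (cases k)
  case 0
  then show ?thesis using pivot by (simp add: mult_ac)
next
  case (Suc i)
  let ?j = "NL + Suc i"
  have "a ?j * (\<nu> ^ i * u (NL + i)) = \<nu> ^ i * (\<nu>\<^sup>2 * (d ?j * u ?j - b ?j * u (Suc ?j)))"
    using interior \<open>NL + k < n\<close> Suc by auto
  also have "\<dots> = \<nu> * d ?j * (\<nu> ^ Suc i * u ?j) - b ?j * (\<nu> ^ Suc (Suc i) * u (NL + Suc (Suc i)))"
    by (simp add: power2_eq_square algebra_simps)
  finally show ?thesis using Suc by simp
qed

lemma interior_coupling_le:
  assumes dom: "dominant_tridiag n d a b" and "b NL \<le> p"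
    and a_pos: "\<forall>j. NL < j \<and> j < n \<longrightarrow> 0 < a j"
    and a_le: "\<forall>j. NL < j \<and> j < n \<longrightarrow> a j \<le> q * d j"
    and "0 < k" and "NL + k < n"
  shows "a (NL + k) * b (NL + (k - 1)) \<le> q * d (NL + k) * (if k - 1 = 0 then p else d (NL + (k - 1)))"
proof (rule mult_mono)
  have "NL + (k - 1) < n" using \<open>NL + k < n\<close> by simp
  then have "0 < b (NL + (k - 1))" "b (NL + (k - 1)) \<le> d (NL + (k - 1))"
    using dom by (auto simp: dominant_tridiag_def)
  then show "0 \<le> b (NL + (k - 1))" "b (NL + (k - 1)) \<le> (if k - 1 = 0 then p else d (NL + (k - 1)))"
    using \<open>b NL \<le> p\<close> by auto
  have "NL < NL + k" using \<open>0 < k\<close> by simp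
  then have "0 < a (NL + k)" and "a (NL + k) \<le> q * d (NL + k)"
    using a_pos a_le \<open>NL + k < n\<close> by blast+
  then show "a (NL + k) \<le> q * d (NL + k)" "0 \<le> q * d (NL + k)" by simp_all
qed

text \<open>After elimination of the layer unknowns the last layer pivot becomes the first diagonal
  entry of the interior pencil; rescaling u (NL + k) by \<nu>^k with \<nu>^2 = \<mu> turns the pencil into
  a tridiagonal eigenproblem for \<nu>.\<close>
lemma interior_pencil_sqrt_bound:
  fixes \<nu> :: complex and u :: "nat \<Rightarrow> complex"
  assumes dom: "dominant_tridiag n d a b" and "NL < n" and un: "u n = 0"
    and layer: "\<forall>j\<le>NL. tridiag_row d a b u j = 0"
    and interior: "\<forall>j. NL < j \<and> j < n \<longrightarrow> \<nu>\<^sup>2 * (d j * u j - b j * u (Suc j)) = a j * u (j - 1)"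
    and a_pos: "\<forall>j. NL < j \<and> j < n \<longrightarrow> 0 < a j"
    and a_le: "\<forall>j. NL < j \<and> j < n \<longrightarrow> a j \<le> q * d j" and "0 \<le> q"
    and nonzero: "\<exists>j. NL \<le> j \<and> j < n \<and> u j \<noteq> 0" and "\<nu> \<noteq> 0"
  shows "\<nu> \<in> \<real> \<and> (Re \<nu>)\<^sup>2 \<le> 4 * q"
proof -
  define p where "p = elim_pivot d a b NL"
  have pivot: "p * u NL = b NL * u (Suc NL)"
    using elim_pivot_eq[OF dom \<open>NL < n\<close> layer] by (simp add: p_def)
  have "b NL \<le> p" using elim_pivot_ge[OF dom \<open>NL < n\<close>] by (simp add: p_def)
  have b_le: "b j \<le> d j" and b_pos: "0 < b j" if "j < n" for j
    using dom that by (auto simp: dominant_tridiag_def)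
  define D where "D k = (if k = 0 then p else d (NL + k))" for k
  define a' where "a' k = (if k = 0 then 0 else a (NL + k))" for k
  define Y where "Y k = \<nu> ^ k * u (NL + k)" for k
  show ?thesis
  proof (rule tridiag_eigenvalue_bound[where m = "n - NL" and D = D and a = a' and b = "\<lambda>k. b (NL + k)"])
    show "\<forall>k<n - NL. 0 < D k"
    proof (intro allI impI)
      fix k assume "k < n - NL"
      then have "0 < b (NL + k)" "b (NL + k) \<le> d (NL + k)" using b_pos b_le by simp_all
      then show "0 < D k" using \<open>b NL \<le> p\<close> by (auto simp: D_def)
    qed
    show "\<forall>k<n - NL. \<nu> * D k * Y k = a' k * Y (k - 1) + b (NL + k) * Y (Suc k)"
    proof (intro allI impI)
      fix k assume "k < n - NL"
      then have "NL + k < n" by simp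
      then show "\<nu> * D k * Y k = a' k * Y (k - 1) + b (NL + k) * Y (Suc k)"
        unfolding D_def a'_def Y_def by (rule rescaled_interior_equation[OF pivot interior])
    qed
    show "\<forall>k. 0 < k \<and> k < n - NL \<longrightarrow> a' k * b (NL + (k - 1)) \<le> q * D k * D (k - 1)"
    proof (intro allI impI)
      fix k assume "0 < k \<and> k < n - NL"
      then have "0 < k" "NL + k < n" by auto
      with interior_coupling_le[OF dom \<open>b NL \<le> p\<close> a_pos a_le this]
      show "a' k * b (NL + (k - 1)) \<le> q * D k * D (k - 1)"
        by (cases "k = 1") (simp_all add: D_def a'_def)
    qed
    show "\<exists>k<n - NL. Y k \<noteq> 0"
    proof -
      obtain j where "NL \<le> j" "j < n" "u j \<noteq> 0" using nonzero by blast
      then show ?thesis using \<open>\<nu> \<noteq> 0\<close> by (intro exI[of _ "j - NL"]) (simp add: Y_def)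
    qed
    show "\<forall>k. 0 < k \<and> k < n - NL \<longrightarrow> 0 < a' k"
      using a_pos by (auto simp: a'_def)
    show "\<forall>k. Suc k < n - NL \<longrightarrow> 0 < b (NL + k)"
      using b_pos by auto
    show "Y (n - NL) = 0"
      using un \<open>NL < n\<close> by (simp add: Y_def)
  qed (simp_all add: a'_def \<open>0 \<le> q\<close>)
qed

lemma interior_pencil_eigenvalue_bound:
  fixes \<mu> :: complex and u :: "nat \<Rightarrow> complex"
  assumes dom: "dominant_tridiag n d a b" and "NL < n" and un: "u n = 0"
    and layer: "\<forall>j\<le>NL. tridiag_row d a b u j = 0"
    and interior: "\<forall>j. NL < j \<and> j < n \<longrightarrow> \<mu> * (d j * u j - b j * u (Suc j)) = a j * u (j - 1)"
    and a_pos: "\<forall>j. NL < j \<and> j < n \<longrightarrow> 0 < a j"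
    and a_le: "\<forall>j. NL < j \<and> j < n \<longrightarrow> a j \<le> q * d j" and "0 \<le> q"
    and nonzero: "\<exists>j. NL \<le> j \<and> j < n \<and> u j \<noteq> 0"
  shows "\<mu> \<in> \<real> \<and> 0 \<le> Re \<mu> \<and> Re \<mu> \<le> 4 * q"
proof (cases "\<mu> = 0")
  case False
  define \<nu> where "\<nu> = csqrt \<mu>"
  have "\<nu>\<^sup>2 = \<mu>" by (simp add: \<nu>_def)
  with False have "\<nu> \<noteq> 0" by auto
  have "\<forall>j. NL < j \<and> j < n \<longrightarrow> \<nu>\<^sup>2 * (d j * u j - b j * u (Suc j)) = a j * u (j - 1)"
    using interior \<open>\<nu>\<^sup>2 = \<mu>\<close> by simp
  from interior_pencil_sqrt_bound[OF dom \<open>NL < n\<close> un layer this a_pos a_le \<open>0 \<le> q\<close> nonzero \<open>\<nu> \<noteq> 0\<close>]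
  have \<nu>_bound: "\<nu> \<in> \<real> \<and> (Re \<nu>)\<^sup>2 \<le> 4 * q" .
  then have "\<mu> = of_real ((Re \<nu>)\<^sup>2)"
    using \<open>\<nu>\<^sup>2 = \<mu>\<close> by (metis Reals_cases Re_complex_of_real of_real_power)
  then have "\<mu> \<in> \<real>" "Re \<mu> = (Re \<nu>)\<^sup>2" by simp_all
  then show ?thesis using \<nu>_bound by simp
qed (use \<open>0 \<le> q\<close> in simp)

lemma block_precond_eigen_row:
  fixes v :: "complex vec" and lam :: complex
  assumes v: "v \<in> carrier_vec n"
    and eig: "map_mat of_real (tridiag_mat n d a b) *\<^sub>v v
      = lam \<cdot>\<^sub>v (map_mat of_real (tridiag_mat n d (\<lambda>j. if NL < j then 0 else a j) b) *\<^sub>v v)"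
    and "j < n"
  shows "(1 - lam) * tridiag_row d (\<lambda>j. if NL < j then 0 else a j) b (zero_extend v) j
    = (if NL < j then a j * zero_extend v (j - 1) else 0)"
proof -
  let ?a' = "\<lambda>j. if NL < j then 0 else a j"
  let ?u = "zero_extend v"
  have "(map_mat of_real (tridiag_mat n d a b) *\<^sub>v v) $ j
      = lam * (map_mat of_real (tridiag_mat n d ?a' b) *\<^sub>v v) $ j"
    using arg_cong[OF eig, of "\<lambda>w. w $ j"] \<open>j < n\<close> by (simp del: index_mult_mat_vec)
  then have "tridiag_row d a b ?u j = lam * tridiag_row d ?a' b ?u j"
    unfolding tridiag_mult_vec_nth[OF v \<open>j < n\<close>] .
  moreover have "tridiag_row d a b ?u j
      = tridiag_row d ?a' b ?u j - (if NL < j then a j * ?u (j - 1) else 0)"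
    by (simp add: tridiag_row_def)
  ultimately show ?thesis by (simp add: algebra_simps)
qed

text \<open>If the interior part of v vanished, the relation would make v a null vector of the
  nonsingular preconditioner.\<close>
lemma block_precond_eigenvector_interior_nonzero:
  fixes v :: "complex vec" and \<mu> :: complex
  assumes dom: "dominant_tridiag n d a' b" and v: "v \<in> carrier_vec n" "v \<noteq> 0\<^sub>v n"
    and "\<mu> \<noteq> 0"
    and rel: "\<And>j. j < n \<Longrightarrow>
      \<mu> * tridiag_row d a' b (zero_extend v) j = (if NL < j then a j * zero_extend v (j - 1) else 0)"
  shows "\<exists>j. NL \<le> j \<and> j < n \<and> zero_extend v j \<noteq> 0"
proof (rule ccontr)
  assume interior_zero: "\<not> ?thesis"
  have "tridiag_row d a' b (zero_extend v) j = 0" if "j < n" for j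
  proof (cases "NL < j")
    case True
    then have "zero_extend v (j - 1) = 0" using interior_zero that by auto
    then show ?thesis using rel[OF that] \<open>\<mu> \<noteq> 0\<close> True by simp
  qed (use rel[OF that] \<open>\<mu> \<noteq> 0\<close> in simp)
  then have "map_mat of_real (tridiag_mat n d a' b) *\<^sub>v v = 0\<^sub>v n"
    using v(1) by (intro eq_vecI) (simp_all del: index_mult_mat_vec add: tridiag_mult_vec_nth)
  with tridiag_kernel_trivial[OF dom v(1)] v(2) show False by simp
qed

lemma block_precond_eigenvalue_bound:
  fixes v :: "complex vec" and lam :: complex
  assumes dom: "dominant_tridiag n d a b"
    and a_pos: "\<forall>j. NL < j \<and> j < n \<longrightarrow> 0 < a j"
    and a_le: "\<forall>j. NL < j \<and> j < n \<longrightarrow> a j \<le> q * d j" and "0 \<le> q"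
    and v: "v \<in> carrier_vec n" "v \<noteq> 0\<^sub>v n"
    and eig: "map_mat of_real (tridiag_mat n d a b) *\<^sub>v v
      = lam \<cdot>\<^sub>v (map_mat of_real (tridiag_mat n d (\<lambda>j. if NL < j then 0 else a j) b) *\<^sub>v v)"
  shows "lam \<in> \<real> \<and> 1 - 4 * q \<le> Re lam \<and> Re lam \<le> 1"
proof (cases "lam = 1")
  case False
  let ?a' = "\<lambda>j. if NL < j then 0 else a j"
  let ?u = "zero_extend v"
  define \<mu> where "\<mu> = 1 - lam"
  have "\<mu> \<noteq> 0" using False by (simp add: \<mu>_def)
  have rel: "\<mu> * tridiag_row d ?a' b ?u j = (if NL < j then a j * ?u (j - 1) else 0)"
    if "j < n" for j
    using block_precond_eigen_row[OF v(1) eig that] by (simp add: \<mu>_def)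
  have nonzero: "\<exists>j. NL \<le> j \<and> j < n \<and> ?u j \<noteq> 0"
    using block_precond_eigenvector_interior_nonzero[OF dominant_tridiag_drop_subdiag[OF dom] v
        \<open>\<mu> \<noteq> 0\<close> rel] .
  then have "NL < n" by auto
  have "\<mu> \<in> \<real> \<and> 0 \<le> Re \<mu> \<and> Re \<mu> \<le> 4 * q"
  proof (rule interior_pencil_eigenvalue_bound[OF dom \<open>NL < n\<close> _ _ _ a_pos a_le \<open>0 \<le> q\<close> nonzero])
    show "?u n = 0" using v(1) by (simp add: zero_extend_def)
    show "\<forall>j\<le>NL. tridiag_row d a b ?u j = 0"
    proof (intro allI impI)
      fix j assume "j \<le> NL"
      then have "tridiag_row d ?a' b ?u j = tridiag_row d a b ?u j"
        by (auto simp: tridiag_row_def)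
      moreover have "\<mu> * tridiag_row d ?a' b ?u j = 0" using rel \<open>NL < n\<close> \<open>j \<le> NL\<close> by simp
      ultimately show "tridiag_row d a b ?u j = 0"
        using \<open>\<mu> \<noteq> 0\<close> by simp
    qed
    show "\<forall>j. NL < j \<and> j < n \<longrightarrow> \<mu> * (d j * ?u j - b j * ?u (Suc j)) = a j * ?u (j - 1)"
    proof (intro allI impI)
      fix j assume "NL < j \<and> j < n"
      then show "\<mu> * (d j * ?u j - b j * ?u (Suc j)) = a j * ?u (j - 1)"
        using rel[of j] by (simp add: tridiag_row_def)
    qed
  qed
  moreover have "lam = 1 - \<mu>" by (simp add: \<mu>_def)
  ultimately show ?thesis by auto
qed (use \<open>0 \<le> q\<close> in simp)

lemma block_precond_tridiag_spectrum:
  assumes dom: "dominant_tridiag n d a b"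
    and a_pos: "\<forall>j. NL < j \<and> j < n \<longrightarrow> 0 < a j"
    and a_le: "\<forall>j. NL < j \<and> j < n \<longrightarrow> a j \<le> q * d j" and "0 \<le> q"
  shows "invertible_mat (block_precond (tridiag_mat n d a b) NL) \<and>
    (\<forall>Mi lam. inverts_mat (block_precond (tridiag_mat n d a b) NL) Mi
              \<and> inverts_mat Mi (block_precond (tridiag_mat n d a b) NL)
        \<longrightarrow> eigenvalue (map_mat complex_of_real (Mi * tridiag_mat n d a b)) lam
        \<longrightarrow> lam \<in> \<real> \<and> 1 - 4 * q \<le> Re lam \<and> Re lam \<le> 1)"
  unfolding block_precond_tridiag
proof (intro conjI allI impI; (elim conjE)?)
  show "invertible_mat (tridiag_mat n d (\<lambda>j. if NL < j then 0 else a j) b)"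
    by (rule tridiag_invertible[OF dominant_tridiag_drop_subdiag[OF dom]])
  fix Mi lam
  assume "inverts_mat (tridiag_mat n d (\<lambda>j. if NL < j then 0 else a j) b) Mi"
    and "inverts_mat Mi (tridiag_mat n d (\<lambda>j. if NL < j then 0 else a j) b)"
    and "eigenvalue (map_mat complex_of_real (Mi * tridiag_mat n d a b)) lam"
  from eigenvector_of_inverse_mult[OF tridiag_mat_carrier tridiag_mat_carrier this]
  obtain v where "v \<in> carrier_vec n" "v \<noteq> 0\<^sub>v n"
    "map_mat of_real (tridiag_mat n d a b) *\<^sub>v v
      = lam \<cdot>\<^sub>v (map_mat of_real (tridiag_mat n d (\<lambda>j. if NL < j then 0 else a j) b) *\<^sub>v v)" .
  from block_precond_eigenvalue_bound[OF dom a_pos a_le \<open>0 \<le> q\<close> this]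
  show "lam \<in> \<real>" "1 - 4 * q \<le> Re lam" "Re lam \<le> 1" by simp_all
qed

section \<open>The upwind discretization\<close>

text \<open>Row j of the upwind matrix belongs to the mesh node x (j + 1); its off-diagonal entries
  are the negated coefficients upwind_sub and upwind_super.\<close>
definition upwind_sub :: "real \<Rightarrow> (nat \<Rightarrow> real) \<Rightarrow> nat \<Rightarrow> real" where
  "upwind_sub eps x j = eps / (mesh_h x (Suc j) * mesh_hbar x (Suc j))"

definition upwind_super :: "real \<Rightarrow> (real \<Rightarrow> real) \<Rightarrow> (nat \<Rightarrow> real) \<Rightarrow> nat \<Rightarrow> real" where
  "upwind_super eps c x j =
     eps / (mesh_h x (Suc (Suc j)) * mesh_hbar x (Suc j)) + c (x (Suc j)) / mesh_h x (Suc (Suc j))"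

definition upwind_diag ::
  "real \<Rightarrow> (real \<Rightarrow> real) \<Rightarrow> (real \<Rightarrow> real) \<Rightarrow> (nat \<Rightarrow> real) \<Rightarrow> nat \<Rightarrow> real" where
  "upwind_diag eps c r x j =
     eps / mesh_hbar x (Suc j) * (1 / mesh_h x (Suc j) + 1 / mesh_h x (Suc (Suc j)))
     + c (x (Suc j)) / mesh_h x (Suc (Suc j)) + r (x (Suc j))"

lemma upwind_matrix_tridiag:
  "upwind_matrix eps c r x N
     = tridiag_mat (N - 1) (upwind_diag eps c r x) (upwind_sub eps x) (upwind_super eps c x)"
  unfolding upwind_matrix_def tridiag_mat_def
  by (rule cong_mat) (simp_all add: Let_def upwind_diag_def upwind_sub_def upwind_super_def)

lemma mesh_h_pos:
  assumes incr: "\<forall>i<N. x i < x (Suc i)" and "0 < i" and "i \<le> N"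
  shows "0 < mesh_h x i"
proof -
  obtain k where i: "i = Suc k" using \<open>0 < i\<close> by (cases i) auto
  with \<open>i \<le> N\<close> have "x k < x (Suc k)" using incr by simp
  then show ?thesis by (simp add: i mesh_h_def)
qed

lemma mesh_in_unit_interval:
  fixes x :: "nat \<Rightarrow> real"
  assumes "x 0 = 0" and "x N = 1" and incr: "\<forall>i<N. x i < x (Suc i)" and "i \<le> N"
  shows "x i \<in> {0..1}"
proof -
  have mono: "x k \<le> x k'" if "k \<le> k'" "k' \<le> N" for k k'
  proof (rule lift_Suc_mono_le_ivl[where f = x and N = "{..<N}"])
    show "x n \<le> x (Suc n)" if "n \<in> {..<N}" for n using incr that by (simp add: less_imp_le)
  qed (use that in auto)
  have "x 0 \<le> x i" "x i \<le> x N" using mono \<open>i \<le> N\<close> by simp_all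
  then show ?thesis using assms by simp
qed

lemma upwind_coefficients:
  assumes "0 < eps" and c_pos: "\<forall>t\<in>{0..1}. 0 < c t"
    and "x 0 = 0" and "x N = 1" and incr: "\<forall>i<N. x i < x (Suc i)" and "j < N - 1"
  shows "0 < upwind_sub eps x j" and "0 < upwind_super eps c x j"
    and "c (x (Suc j)) / mesh_h x (Suc (Suc j)) < upwind_super eps c x j"
    and "upwind_diag eps c r x j = upwind_sub eps x j + upwind_super eps c x j + r (x (Suc j))"
proof -
  have h: "0 < mesh_h x (Suc j)" "0 < mesh_h x (Suc (Suc j))"
    using mesh_h_pos[OF incr] \<open>j < N - 1\<close> by auto
  then have hbar: "0 < mesh_hbar x (Suc j)" by (simp add: mesh_hbar_def)
  have "0 < c (x (Suc j))"
    using c_pos mesh_in_unit_interval[OF assms(3-5), of "Suc j"] \<open>j < N - 1\<close> by simp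
  show "0 < upwind_sub eps x j" using h hbar \<open>0 < eps\<close> by (simp add: upwind_sub_def)
  show super: "c (x (Suc j)) / mesh_h x (Suc (Suc j)) < upwind_super eps c x j"
    using h hbar \<open>0 < eps\<close> by (simp add: upwind_super_def)
  show "0 < upwind_super eps c x j"
    using \<open>0 < c (x (Suc j))\<close> h order.strict_trans[OF _ super] by simp
  show "upwind_diag eps c r x j = upwind_sub eps x j + upwind_super eps c x j + r (x (Suc j))"
    using h hbar by (simp add: upwind_diag_def upwind_sub_def upwind_super_def field_simps)
qed

lemma upwind_sub_le_diag:
  assumes "0 < eps" and "0 < Clow" and c_lower: "\<forall>t\<in>{0..1}. Clow \<le> c t"
    and r_nonneg: "\<forall>t\<in>{0..1}. 0 \<le> r t"
    and mesh: "x 0 = 0" "x N = 1" "\<forall>i<N. x i < x (Suc i)"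
    and "0 < alpha" and h_lower: "alpha / real N \<le> mesh_h x (Suc j)" and "j < N - 1"
  shows "upwind_sub eps x j \<le> 2 * eps * real N / (Clow * alpha) * upwind_diag eps c r x j"
proof -
  define h1 h2 where "h1 = mesh_h x (Suc j)" and "h2 = mesh_h x (Suc (Suc j))"
  have "0 < h1" "0 < h2"
    using mesh_h_pos[OF mesh(3)] \<open>j < N - 1\<close> by (auto simp: h1_def h2_def)
  have "x (Suc j) \<in> {0..1}"
    using mesh_in_unit_interval[OF mesh] \<open>j < N - 1\<close> by simp
  then have "Clow \<le> c (x (Suc j))" "0 \<le> r (x (Suc j))"
    using c_lower r_nonneg by auto
  have c_pos: "\<forall>t\<in>{0..1}. 0 < c t" using c_lower \<open>0 < Clow\<close> by force
  note coeffs = upwind_coefficients[OF \<open>0 < eps\<close> c_pos mesh \<open>j < N - 1\<close>]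
  have "Clow / h2 \<le> c (x (Suc j)) / h2"
    using \<open>Clow \<le> c (x (Suc j))\<close> \<open>0 < h2\<close> by (simp add: divide_right_mono)
  also have "\<dots> \<le> upwind_diag eps c r x j"
    using coeffs(1,3) coeffs(4)[of r] \<open>0 \<le> r (x (Suc j))\<close> by (simp add: h2_def)
  finally have diag_ge: "Clow / h2 \<le> upwind_diag eps c r x j" .
  have "alpha \<le> h1 * real N"
    using h_lower \<open>j < N - 1\<close> by (simp add: h1_def field_simps)
  have "upwind_sub eps x j = eps / (h1 * ((h1 + h2) / 2))"
    by (simp add: upwind_sub_def mesh_hbar_def h1_def h2_def)
  also have "\<dots> \<le> eps / (h1 * h2 / 2)"
    using \<open>0 < h1\<close> \<open>0 < h2\<close> \<open>0 < eps\<close> by (intro divide_left_mono) (auto intro!: mult_pos_pos add_pos_pos)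
  also have "\<dots> = 2 * eps / (h1 * h2)" by simp
  also have "\<dots> \<le> 2 * eps * real N / (alpha * h2)"
    using \<open>alpha \<le> h1 * real N\<close> \<open>0 < alpha\<close> \<open>0 < h1\<close> \<open>0 < h2\<close> \<open>0 < eps\<close>
    by (simp add: field_simps mult_left_mono)
  also have "\<dots> = 2 * eps * real N / (Clow * alpha) * (Clow / h2)"
    using \<open>0 < Clow\<close> by (simp add: field_simps)
  also have "\<dots> \<le> 2 * eps * real N / (Clow * alpha) * upwind_diag eps c r x j"
    using diag_ge \<open>0 < eps\<close> \<open>0 < Clow\<close> \<open>0 < alpha\<close> by (intro mult_left_mono) auto
  finally show ?thesis .
qed

lemma upwind_dominant_tridiag:
  assumes "0 < eps" and c_pos: "\<forall>t\<in>{0..1}. 0 < c t" and r_nonneg: "\<forall>t\<in>{0..1}. 0 \<le> r t"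
    and mesh: "x 0 = 0" "x N = 1" "\<forall>i<N. x i < x (Suc i)"
  shows "dominant_tridiag (N - 1) (upwind_diag eps c r x) (upwind_sub eps x) (upwind_super eps c x)"
  unfolding dominant_tridiag_def
proof (intro allI impI conjI)
  fix j assume j: "j < N - 1"
  have "0 \<le> r (x (Suc j))"
    using r_nonneg mesh_in_unit_interval[OF mesh, of "Suc j"] j by simp
  with upwind_coefficients(1,2)[OF \<open>0 < eps\<close> c_pos mesh j]
    upwind_coefficients(4)[OF \<open>0 < eps\<close> c_pos mesh j, of r]
  show "0 \<le> upwind_sub eps x j" "0 < upwind_super eps c x j"
    "upwind_sub eps x j + upwind_super eps c x j \<le> upwind_diag eps c r x j"
    by simp_all
qed

theorem theorem2p5:
  fixes eps Clow Cup alpha :: real and c r :: "real \<Rightarrow> real" and mx :: "nat \<Rightarrow> real"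
    and N NL :: nat
  assumes eps_pos: "0 < eps" and eps_le1: "eps \<le> 1"
    and Clow_pos: "0 < Clow" and c_bounds: "\<forall>t\<in>{0..1}. Clow \<le> c t \<and> c t \<le> Cup"
    and r_nonneg: "\<forall>t\<in>{0..1}. 0 \<le> r t"
    and mesh0: "mx 0 = 0" and meshN: "mx N = 1" and mesh_incr: "\<forall>i<N. mx i < mx (Suc i)"
    and NL_pos: "1 \<le> NL" and NL_le: "NL \<le> N - 1"
    and alpha_pos: "0 < alpha"
    and mesh_interior: "\<forall>i. NL + 1 \<le> i \<and> i \<le> N \<longrightarrow> alpha / real N \<le> mesh_h mx i"
  shows "invertible_mat (block_precond (upwind_matrix eps c r mx N) NL) \<and>
    (\<forall>Mi lam. inverts_mat (block_precond (upwind_matrix eps c r mx N) NL) Mi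
              \<and> inverts_mat Mi (block_precond (upwind_matrix eps c r mx N) NL)
        \<longrightarrow> eigenvalue (map_mat complex_of_real (Mi * upwind_matrix eps c r mx N)) lam
        \<longrightarrow> lam \<in> \<real> \<and> 1 - 8 * eps * real N / (Clow * alpha) \<le> Re lam \<and> Re lam \<le> 1)"
proof -
  define n d a b where "n = N - 1" and "d = upwind_diag eps c r mx"
    and "a = upwind_sub eps mx" and "b = upwind_super eps c mx"
  define q where "q = 2 * eps * real N / (Clow * alpha)"
  have c_lower: "\<forall>t\<in>{0..1}. Clow \<le> c t" and c_pos: "\<forall>t\<in>{0..1}. 0 < c t"
    using c_bounds Clow_pos by force+
  have dom: "dominant_tridiag n d a b"
    unfolding n_def d_def a_def b_def
    by (rule upwind_dominant_tridiag[OF eps_pos c_pos r_nonneg mesh0 meshN mesh_incr])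
  have a_pos: "\<forall>j. NL < j \<and> j < n \<longrightarrow> 0 < a j"
    using upwind_coefficients(1)[OF eps_pos c_pos mesh0 meshN mesh_incr] by (simp add: n_def a_def)
  have a_le: "\<forall>j. NL < j \<and> j < n \<longrightarrow> a j \<le> q * d j"
  proof (intro allI impI)
    fix j assume j: "NL < j \<and> j < n"
    then have "alpha / real N \<le> mesh_h mx (Suc j)" using mesh_interior by (auto simp: n_def)
    with upwind_sub_le_diag[OF eps_pos Clow_pos c_lower r_nonneg mesh0 meshN mesh_incr alpha_pos] j
    show "a j \<le> q * d j" by (simp add: a_def d_def q_def n_def)
  qed
  have "0 \<le> q" using eps_pos Clow_pos alpha_pos by (simp add: q_def)
  have q4: "4 * q = 8 * eps * real N / (Clow * alpha)" by (simp add: q_def)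
  have A: "upwind_matrix eps c r mx N = tridiag_mat n d a b"
    by (simp add: upwind_matrix_tridiag n_def d_def a_def b_def)
  show ?thesis
    using block_precond_tridiag_spectrum[OF dom a_pos a_le \<open>0 \<le> q\<close>] unfolding A q4 .
qed

end
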